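(* Let $n\ge2$, let $\mathbb{F}$ be an algebraic extension of a prime field and let $p$ be an odd prime. (i) If $\mathrm{char}(\mathbb{F})$ is $0$, or $\mathrm{char}(\mathbb{F})=p$ with $\gcd(n,p)=1$, then $\mathrm{Der}(\mathbb{F}T_{4n})=\mathrm{Der}_{\mathrm{inn}}(\mathbb{F}T_{4n})$. (ii) If $\mathrm{char}(\mathbb{F})=p$ with $\gcd(n,p)\ne1$, then $\mathrm{Der}_{\mathrm{inn}}(\mathbb{F}T_{4n})\subsetneq\mathrm{Der}(\mathbb{F}T_{4n})$, i.e. $\mathbb{F}T_{4n}$ has a derivation that is not inner.
   Context: $T_{4n}=\langle a,b\mid a^{2n}=1,\ a^n=b^2,\ b^{-1}ab=a^{-1}\rangle$ is the dicyclic group of order $4n$; $\mathbb{F}T_{4n}$ is its group algebra. A derivation of a ring $R$ is a map $d:R\to R$ with $d(x+y)=d(x)+d(y)$ and $d(xy)=d(x)y+xd(y)$; $\mathrm{Der}(R)$ is the set of all derivations. An inner derivation is one of the form $d_\beta(\alpha)=\alpha\beta-\beta\alpha$ for fixed $\beta\in R$; $\mathrm{Der}_{\mathrm{inn}}(R)$ is the set of inner derivations. *)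

theory Defs
  imports Main "HOL-Library.FuncSet" "HOL-Computational_Algebra.Polynomial"
begin

text \<open>Concrete model of the dicyclic group T_{4n}: the pair (i,e) with
  i < 2n, e < 2 stands for a^i b^e.  Using b^{-1} a b = a^{-1} (so b a^j = a^{-j} b)
  and b^2 = a^n:  a^i b^e a^j b^f = a^(i +/- j + [e=f=1] n) b^(e+f mod 2).\<close>

definition dic_carrier :: "nat \<Rightarrow> (nat \<times> nat) set" where
  "dic_carrier n = {0..<2*n} \<times> {0..<2}"

definition dic_mult :: "nat \<Rightarrow> nat \<times> nat \<Rightarrow> nat \<times> nat \<Rightarrow> nat \<times> nat" where
  "dic_mult n x y =
     (case x of (i, e) \<Rightarrow> case y of (j, f) \<Rightarrow>
       (((if e = 0 then i + j else i + (2*n - j)) + (if e = 1 \<and> f = 1 then n else 0)) mod (2*n),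
        (e + f) mod 2))"

definition ga_carrier :: "nat \<Rightarrow> (nat \<times> nat \<Rightarrow> 'a::field) set" where
  "ga_carrier n = {f. \<forall>z. z \<notin> dic_carrier n \<longrightarrow> f z = 0}"

definition ga_add :: "(nat \<times> nat \<Rightarrow> 'a::field) \<Rightarrow> (nat \<times> nat \<Rightarrow> 'a) \<Rightarrow> (nat \<times> nat \<Rightarrow> 'a)" where
  "ga_add f g = (\<lambda>z. f z + g z)"

definition ga_sub :: "(nat \<times> nat \<Rightarrow> 'a::field) \<Rightarrow> (nat \<times> nat \<Rightarrow> 'a) \<Rightarrow> (nat \<times> nat \<Rightarrow> 'a)" where
  "ga_sub f g = (\<lambda>z. f z - g z)"

definition ga_mult :: "nat \<Rightarrow> (nat \<times> nat \<Rightarrow> 'a::field) \<Rightarrow> (nat \<times> nat \<Rightarrow> 'a) \<Rightarrow> (nat \<times> nat \<Rightarrow> 'a)" where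
  "ga_mult n f g = (\<lambda>z. \<Sum>x\<in>dic_carrier n. \<Sum>y\<in>dic_carrier n.
                          if dic_mult n x y = z then f x * g y else 0)"

definition Der :: "nat \<Rightarrow> ((nat \<times> nat \<Rightarrow> 'a::field) \<Rightarrow> (nat \<times> nat \<Rightarrow> 'a)) set" where
  "Der n = {d \<in> extensional (ga_carrier n).
      (\<forall>x\<in>ga_carrier n. d x \<in> ga_carrier n) \<and>
      (\<forall>x\<in>ga_carrier n. \<forall>y\<in>ga_carrier n. d (ga_add x y) = ga_add (d x) (d y)) \<and>
      (\<forall>x\<in>ga_carrier n. \<forall>y\<in>ga_carrier n.
          d (ga_mult n x y) = ga_add (ga_mult n (d x) y) (ga_mult n x (d y)))}"

definition Der_inn :: "nat \<Rightarrow> ((nat \<times> nat \<Rightarrow> 'a::field) \<Rightarrow> (nat \<times> nat \<Rightarrow> 'a)) set" where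
  "Der_inn n = {restrict (\<lambda>\<alpha>. ga_sub (ga_mult n \<alpha> \<beta>) (ga_mult n \<beta> \<alpha>)) (ga_carrier n)
                 | \<beta>. \<beta> \<in> ga_carrier n}"

definition prime_subfield :: "'a::field set" where
  "prime_subfield = {of_int a / of_int b | a b. of_int b \<noteq> (0::'a)}"

definition algebraic_over_prime_field :: "'a::field itself \<Rightarrow> bool" where
  "algebraic_over_prime_field _ \<longleftrightarrow>
     (\<forall>x::'a. \<exists>p::'a poly. p \<noteq> 0 \<and> (\<forall>i. coeff p i \<in> prime_subfield) \<and> poly p x = 0)"

end

theory Submission
  imports Defs "HOL-Computational_Algebra.Primes" "HOL-Algebra.Group" "HOL-Library.Function_Algebras"
begin

text \<open>
  (i) An algebraic extension \<open>F\<close> of a prime field has no nonzero derivation \<open>D\<close>: if \<open>q\<close> has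
  minimal degree among polynomials over the prime field vanishing at \<open>x\<close>, then
  \<open>0 = D(q(x)) = q'(x) D(x)\<close>, and by minimality \<open>q'(x) = 0\<close> forces \<open>q' = 0\<close>, impossible in characteristic \<open>0\<close>;
  in characteristic \<open>P\<close> it makes \<open>q(x)\<close> the \<open>P\<close>-th power of \<open>h(x)\<close> for some \<open>h\<close> of smaller degree.
  Hence every derivation \<open>d\<close> of \<open>FG\<close> is \<open>F\<close>-linear, and if \<open>|G| = 4n\<close> is invertible in \<open>F\<close>, then
  \<open>d = [-, \<beta>]\<close> for \<open>\<beta> = -|G|\<^sup>-\<^sup>1 \<Sum>\<^sub>g d(g) g\<^sup>-\<^sup>1\<close>.
  (ii) If \<open>p\<close> divides \<open>n\<close>, then \<open>a\<^sup>i b\<^sup>e \<mapsto> i (a - a\<^sup>-\<^sup>1) a\<^sup>i b\<^sup>e\<close> extends to a derivation. It maps \<open>a\<close> to an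
  element with coefficient \<open>1\<close> at \<open>a\<^sup>2\<close>, whereas every commutator \<open>[a, \<beta>]\<close> has coefficient \<open>0\<close> there.
\<close>

section \<open>Derivations of algebraic extensions of prime fields\<close>

definition over_prime_subfield :: "'a::field poly \<Rightarrow> bool" where
  "over_prime_subfield q \<longleftrightarrow> (\<forall>i. coeff q i \<in> prime_subfield)"

lemma of_nat_mult_in_prime_subfield:
  assumes "c \<in> (prime_subfield :: 'a::field set)"
  shows "of_nat m * c \<in> prime_subfield"
proof -
  from assms obtain a b where "c = of_int a / of_int b" "of_int b \<noteq> (0::'a)"
    unfolding prime_subfield_def by blast
  then have "of_nat m * c = of_int (int m * a) / of_int b" by simp
  with \<open>of_int b \<noteq> 0\<close> show ?thesis unfolding prime_subfield_def by blast
qed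

lemma over_prime_subfield_pderiv:
  "over_prime_subfield q \<Longrightarrow> over_prime_subfield (pderiv q)"
  unfolding over_prime_subfield_def coeff_pderiv by (blast intro: of_nat_mult_in_prime_subfield)

lemma prime_subfield_frobenius_fixed:
  fixes c :: "'a::field"
  assumes "CHAR('a) > 0" and "c \<in> prime_subfield"
  shows "c ^ CHAR('a) = c"
proof -
  have P: "prime CHAR('a)" using assms(1) by (rule prime_CHAR_semidom)
  have nat: "(of_nat k :: 'a) ^ CHAR('a) = of_nat k" for k
  proof (induction k)
    case (Suc k)
    have "(of_nat k + 1 :: 'a) ^ CHAR('a) = of_nat k ^ CHAR('a) + 1 ^ CHAR('a)"
      by (rule freshmans_dream[OF P refl])
    with Suc show ?case by (simp add: add.commute)
  qed (use assms(1) in simp)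
  have int: "(of_int k :: 'a) ^ CHAR('a) = of_int k" for k
  proof (cases k rule: int_cases)
    case (neg m)
    then have "(of_int k :: 'a) = - of_nat (Suc m)" by simp
    then show ?thesis using nat[of "Suc m"] minus_power_prime_CHAR[OF refl P] by (simp only:)
  qed (simp add: nat)
  from assms(2) obtain a b where "c = of_int a / of_int b"
    unfolding prime_subfield_def by blast
  then show ?thesis by (simp add: power_divide int)
qed

locale field_derivation =
  fixes D :: "'a::field \<Rightarrow> 'a"
  assumes add: "D (x + y) = D x + D y"
    and mult: "D (x * y) = x * D y + y * D x"
begin

lemma zero: "D 0 = 0"
  using add[of 0 0] by (metis add.right_neutral add_left_cancel)

lemma one: "D 1 = 0"
  using mult[of 1 1] by (metis mult_1 add.right_neutral add_left_cancel)

lemma minus: "D (- x) = - D x"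
  using add[of x "- x"] zero by (simp add: eq_neg_iff_add_eq_0 add.commute)

lemma of_int: "D (of_int k) = 0"
proof -
  have nat: "D (of_nat m) = 0" for m
    by (induction m) (simp_all add: zero one add)
  show ?thesis
  proof (cases k rule: int_cases)
    case (neg m)
    then have "(of_int k :: 'a) = - of_nat (Suc m)" by simp
    then show ?thesis by (simp only: minus nat minus_zero)
  qed (simp add: nat)
qed

lemma on_prime_subfield: "c \<in> prime_subfield \<Longrightarrow> D c = 0"
  unfolding prime_subfield_def
proof (elim CollectE exE conjE)
  fix a b assume c: "c = of_int a / of_int b" and b: "of_int b \<noteq> (0::'a)"
  have "of_int b * D c = D (of_int b * c)" using mult[of "of_int b" c] by (simp add: of_int)
  also have "\<dots> = 0" using b c by (simp add: of_int)
  finally show "D c = 0" using b by simp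
qed

lemma poly_chain_rule:
  "over_prime_subfield q \<Longrightarrow> D (poly q x) = poly (pderiv q) x * D x"
proof (induction q rule: pCons_induct)
  case (pCons a q)
  then have "a \<in> prime_subfield" "over_prime_subfield q"
    unfolding over_prime_subfield_def by (metis coeff_pCons_0, metis coeff_pCons_Suc)
  with pCons.IH show ?case
    by (simp add: add mult on_prime_subfield pderiv_pCons algebra_simps)
qed (simp add: zero)

end

lemma pderiv_eq_0_coeff:
  fixes q :: "'a::field poly"
  assumes "pderiv q = 0" and "\<not> CHAR('a) dvd k"
  shows "coeff q k = 0"
proof -
  obtain j where k: "k = Suc j" using assms(2) by (cases k) auto
  have "of_nat k * coeff q k = coeff (pderiv q) j" by (simp add: coeff_pderiv k)
  moreover have "(of_nat k :: 'a) \<noteq> 0" using assms(2) by (simp add: of_nat_eq_0_iff_char_dvd)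
  ultimately show ?thesis using assms(1) by simp
qed

text \<open>Frobenius fixes the coefficients, so \<open>h(x)\<^sup>P = \<Sum> coeff q (P i) x\<^sup>P\<^sup>i = q(x)\<close>.\<close>
lemma poly_eq_frobenius_power:
  fixes q :: "'a::field poly"
  assumes P: "CHAR('a) > 0" and q: "over_prime_subfield q"
    and sparse: "\<And>k. \<not> CHAR('a) dvd k \<Longrightarrow> coeff q k = 0"
  defines "h \<equiv> \<Sum>i\<le>degree q. monom (coeff q (CHAR('a) * i)) i"
  shows "coeff h i = coeff q (CHAR('a) * i)" and "poly h x ^ CHAR('a) = poly q x"
proof -
  let ?P = "CHAR('a)" and ?d = "degree q"
  have pr: "prime ?P" using P by (rule prime_CHAR_semidom)
  have "?P \<ge> 1" using P by simp
  show "coeff h i = coeff q (?P * i)" for i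
  proof -
    have "i \<le> ?P * i" using \<open>?P \<ge> 1\<close> by simp
    then have "\<not> i \<le> ?d \<Longrightarrow> coeff q (?P * i) = 0" by (intro coeff_eq_0) linarith
    then show ?thesis unfolding h_def by (auto simp: coeff_sum)
  qed
  have "poly h x ^ ?P = (\<Sum>i\<le>?d. (coeff q (?P * i) * x ^ i) ^ ?P)"
    unfolding h_def poly_sum poly_monom by (rule freshmans_dream_sum[OF pr refl])
  also have "\<dots> = (\<Sum>i\<le>?d. coeff q (?P * i) * x ^ (?P * i))"
    using prime_subfield_frobenius_fixed[OF P] q
    by (simp add: over_prime_subfield_def power_mult_distrib flip: power_mult)
      (simp add: mult.commute)
  also have "\<dots> = (\<Sum>k\<in>(\<lambda>i. ?P * i) ` {..?d}. coeff q k * x ^ k)"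
    using P by (subst sum.reindex) (auto simp: inj_on_def)
  also have "\<dots> = (\<Sum>k\<le>?P * ?d. coeff q k * x ^ k)"
  proof (intro sum.mono_neutral_left)
    have "coeff q k = 0" if "k \<notin> (\<lambda>i. ?P * i) ` {..?d}" for k
    proof (cases "?P dvd k")
      case True
      then obtain j where k: "k = ?P * j" ..
      with that have "?d < j" by auto
      also have "j \<le> k" using k \<open>?P \<ge> 1\<close> by simp
      finally show ?thesis by (rule coeff_eq_0)
    qed (rule sparse)
    then show "\<forall>k\<in>{..?P * ?d} - (\<lambda>i. ?P * i) ` {..?d}. coeff q k * x ^ k = 0" by simp
  qed auto
  also have "\<dots> = (\<Sum>k\<le>?d. coeff q k * x ^ k)"
    using \<open>?P \<ge> 1\<close> by (intro sum.mono_neutral_right) (auto simp: coeff_eq_0)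
  finally show "poly h x ^ ?P = poly q x" by (simp add: poly_altdef)
qed

lemma degree_pos_if_root:
  fixes q :: "'a::field poly"
  assumes "q \<noteq> 0" and "poly q x = 0"
  shows "degree q > 0"
proof (rule ccontr)
  assume "\<not> degree q > 0"
  then have "poly q x = coeff q 0" by (simp add: poly_altdef)
  with assms show False by (metis \<open>\<not> degree q > 0\<close> leading_coeff_0_iff neq0_conv)
qed

lemma degree_pderiv_less:
  "degree q > 0 \<Longrightarrow> degree (pderiv q) < degree q"
  by (rule le_less_trans[of _ "degree q - 1"])
    (auto intro!: degree_le simp: coeff_pderiv coeff_eq_0)

text \<open>In characteristic \<open>0\<close> the hypotheses are contradictory.\<close>
lemma inseparable_root_descent:
  fixes q :: "'a::field poly"
  assumes q: "q \<noteq> 0" "over_prime_subfield q" "poly q x = 0" and pd: "pderiv q = 0"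
  obtains h where "h \<noteq> 0" "over_prime_subfield h" "poly h x = 0" "degree h < degree q"
proof -
  let ?P = "CHAR('a)" and ?d = "degree q"
  have d: "?d > 0" using q by (intro degree_pos_if_root)
  have sparse: "coeff q k = 0" if "\<not> ?P dvd k" for k using pd that by (rule pderiv_eq_0_coeff)
  have lc: "coeff q ?d \<noteq> 0" using q by simp
  then have dvd: "?P dvd ?d" using sparse by blast
  have P: "?P > 0" using dvd d by (intro Nat.gr0I) simp
  then have P2: "?P \<ge> 2" using prime_CHAR_semidom prime_ge_2_nat by blast
  define h where "h = (\<Sum>i\<le>?d. monom (coeff q (?P * i)) i)"
  have ch: "coeff h i = coeff q (?P * i)" for i
    unfolding h_def by (rule poly_eq_frobenius_power(1)[OF P q(2) sparse])
  have "poly h x ^ ?P = poly q x"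
    unfolding h_def by (rule poly_eq_frobenius_power(2)[OF P q(2) sparse])
  with q(3) have root: "poly h x = 0" by simp
  have "coeff h (?d div ?P) \<noteq> 0" using ch dvd lc by simp
  then have "h \<noteq> 0" by auto
  moreover have "over_prime_subfield h"
    using q(2) by (simp add: over_prime_subfield_def ch)
  moreover have "degree h < ?d"
  proof -
    have "coeff h j = 0" if "?d div ?P < j" for j
    proof -
      have "?P * (?d div ?P) < ?P * j" using that P by simp
      then show ?thesis using dvd by (simp add: ch coeff_eq_0)
    qed
    then have "degree h \<le> ?d div ?P" by (simp add: degree_le)
    also have "\<dots> < ?d" using d P2 by simp
    finally show ?thesis .
  qed
  ultimately show ?thesis using root that by blast
qed

theorem (in field_derivation) vanishes_if_algebraic:
  assumes "algebraic_over_prime_field TYPE('a)"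
  shows "D x = 0"
proof (rule ccontr)
  assume Dx: "D x \<noteq> 0"
  define S where "S = {q. q \<noteq> 0 \<and> over_prime_subfield q \<and> poly q x = 0}"
  obtain q0 where "q0 \<in> S"
    using assms unfolding algebraic_over_prime_field_def S_def over_prime_subfield_def by blast
  then obtain q where q: "q \<in> S" and min: "\<And>r. r \<in> S \<Longrightarrow> degree q \<le> degree r"
    using ex_has_least_nat[of "\<lambda>q. q \<in> S" q0 degree] by blast
  have "poly (pderiv q) x * D x = D (poly q x)"
    using q by (intro poly_chain_rule[symmetric]) (simp add: S_def)
  then have "poly (pderiv q) x = 0" using q Dx by (simp add: S_def zero)
  moreover have "degree (pderiv q) < degree q"
    using q by (intro degree_pderiv_less degree_pos_if_root) (auto simp: S_def)
  ultimately have "pderiv q = 0"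
    using min[of "pderiv q"] q by (force simp: S_def over_prime_subfield_pderiv)
  with q obtain h where "h \<in> S" "degree h < degree q"
    unfolding S_def by (auto elim: inseparable_root_descent)
  with min show False by fastforce
qed

section \<open>Group algebras of finite groups\<close>

definition group_alg :: "('g, 'b) monoid_scheme \<Rightarrow> ('g \<Rightarrow> 'a::zero) set" where
  "group_alg G = {f. \<forall>z. z \<notin> carrier G \<longrightarrow> f z = 0}"

definition conv :: "('g, 'b) monoid_scheme \<Rightarrow> ('g \<Rightarrow> 'a::comm_ring_1) \<Rightarrow> ('g \<Rightarrow> 'a) \<Rightarrow> 'g \<Rightarrow> 'a" where
  "conv G f h = (\<lambda>z. \<Sum>x\<in>carrier G. \<Sum>y\<in>carrier G. if x \<otimes>\<^bsub>G\<^esub> y = z then f x * h y else 0)"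

definition gbasis :: "'g \<Rightarrow> 'g \<Rightarrow> 'a::zero_neq_one" where
  "gbasis g = (\<lambda>z. if z = g then 1 else 0)"

definition scale :: "'a::times \<Rightarrow> ('g \<Rightarrow> 'a) \<Rightarrow> 'g \<Rightarrow> 'a" where
  "scale c f = (\<lambda>z. c * f z)"

definition lin_ext :: "('g, 'b) monoid_scheme \<Rightarrow> ('g \<Rightarrow> 'g \<Rightarrow> 'a::comm_ring_1) \<Rightarrow> ('g \<Rightarrow> 'a) \<Rightarrow> 'g \<Rightarrow> 'a" where
  "lin_ext G B f = (\<Sum>g\<in>carrier G. scale (f g) (B g))"

definition inner_derivation :: "('g, 'b) monoid_scheme \<Rightarrow> ('g \<Rightarrow> 'a::comm_ring_1) \<Rightarrow> ('g \<Rightarrow> 'a) \<Rightarrow> 'g \<Rightarrow> 'a" where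
  "inner_derivation G \<beta> \<alpha> = conv G \<alpha> \<beta> - conv G \<beta> \<alpha>"

definition derivation_on :: "('g, 'b) monoid_scheme \<Rightarrow> (('g \<Rightarrow> 'a::comm_ring_1) \<Rightarrow> 'g \<Rightarrow> 'a) \<Rightarrow> bool" where
  "derivation_on G d \<longleftrightarrow> (\<forall>x\<in>group_alg G. d x \<in> group_alg G \<and>
     (\<forall>y\<in>group_alg G. d (x + y) = d x + d y \<and> d (conv G x y) = conv G (d x) y + conv G x (d y)))"

lemma sum_fun_apply: "(\<Sum>i\<in>I. F i) z = (\<Sum>i\<in>I. F i z)"
  by (induction I rule: infinite_finite_induct) auto

lemma gbasis_apply: "gbasis g z = (if z = g then 1 else 0)"
  by (simp add: gbasis_def)

lemma scale_apply [simp]: "scale c f z = c * f z"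
  by (simp add: scale_def)

lemma scale_scale [simp]: "scale c (scale c' f) = scale (c * c') (f :: _ \<Rightarrow> 'a::semigroup_mult)"
  by (simp add: scale_def mult.assoc)

lemma scale_zero_left: "scale 0 f = (0 :: _ \<Rightarrow> 'a::mult_zero)"
  by (simp add: fun_eq_iff)

lemma scale_add_left: "scale (c + c') f = scale c f + scale c' (f :: _ \<Rightarrow> 'a::semiring)"
  by (rule ext) (simp add: distrib_right)

lemma scale_add: "scale c (f + h) = scale c f + scale c (h :: _ \<Rightarrow> 'a::semiring)"
  by (rule ext) (simp add: distrib_left)

lemma scale_diff: "scale c (f - h) = scale c f - scale c (h :: _ \<Rightarrow> 'a::ring)"
  by (rule ext) (simp add: right_diff_distrib)

lemma scale_sum: "scale c (\<Sum>i\<in>I. F i) = (\<Sum>i\<in>I. scale c (F i :: _ \<Rightarrow> 'a::comm_semiring_0))"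
  by (rule ext) (simp add: sum_fun_apply sum_distrib_left)

lemma
  fixes f h :: "'g \<Rightarrow> 'a::comm_ring_1"
  shows group_alg_add: "f \<in> group_alg G \<Longrightarrow> h \<in> group_alg G \<Longrightarrow> f + h \<in> group_alg G"
    and group_alg_diff: "f \<in> group_alg G \<Longrightarrow> h \<in> group_alg G \<Longrightarrow> f - h \<in> group_alg G"
    and group_alg_scale: "f \<in> group_alg G \<Longrightarrow> scale c f \<in> group_alg G"
    and group_alg_gbasis: "g \<in> carrier G \<Longrightarrow> (gbasis g :: _ \<Rightarrow> 'a) \<in> group_alg G"
  by (auto simp: group_alg_def gbasis_def)

lemma group_alg_zero: "0 \<in> group_alg G"
  by (simp add: group_alg_def)

lemma group_alg_sum:
  fixes F :: "'i \<Rightarrow> 'g \<Rightarrow> 'a::comm_ring_1"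
  shows "(\<And>i. i \<in> I \<Longrightarrow> F i \<in> group_alg G) \<Longrightarrow> (\<Sum>i\<in>I. F i) \<in> group_alg G"
  by (induction I rule: infinite_finite_induct) (auto simp: group_alg_def)

lemma conv_apply: "conv G f h z = (\<Sum>x\<in>carrier G. \<Sum>y\<in>carrier G. f x * h y * gbasis (x \<otimes>\<^bsub>G\<^esub> y) z)"
  unfolding conv_def gbasis_def by (intro sum.cong refl) simp

lemma conv_add_left: "conv G (f + f') h = conv G f h + conv G f' h"
  and conv_add_right: "conv G f (h + h') = conv G f h + conv G f h'"
  and conv_diff_left: "conv G (f - f') h = conv G f h - conv G f' h"
  and conv_diff_right: "conv G f (h - h') = conv G f h - conv G f h'"
  and conv_scale_left: "conv G (scale c f) h = scale c (conv G f h)"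
  and conv_scale_right: "conv G f (scale c h) = scale c (conv G f h)"
  and conv_zero_left: "conv G 0 h = 0"
  and conv_zero_right: "conv G f 0 = 0"
  by (simp_all add: fun_eq_iff conv_apply algebra_simps sum.distrib sum_subtractf
      sum_distrib_left)

lemma conv_sum_left: "conv G (\<Sum>i\<in>I. F i) h = (\<Sum>i\<in>I. conv G (F i) h)"
  by (induction I rule: infinite_finite_induct)
    (simp_all only: sum.infinite sum.empty sum.insert conv_zero_left conv_add_left not_False_eq_True)

lemma conv_sum_right: "conv G h (\<Sum>i\<in>I. F i) = (\<Sum>i\<in>I. conv G h (F i))"
  by (induction I rule: infinite_finite_induct)
    (simp_all only: sum.infinite sum.empty sum.insert conv_zero_right conv_add_right not_False_eq_True)

lemma conv_sum_sum:
  "conv G (\<Sum>x\<in>I. scale (a x) (F x)) (\<Sum>y\<in>J. scale (b y) (H y))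
     = (\<Sum>x\<in>I. \<Sum>y\<in>J. scale (a x * b y) (conv G (F x) (H y)))"
proof -
  have "conv G (\<Sum>x\<in>I. scale (a x) (F x)) (\<Sum>y\<in>J. scale (b y) (H y))
      = (\<Sum>x\<in>I. conv G (scale (a x) (F x)) (\<Sum>y\<in>J. scale (b y) (H y)))"
    by (rule conv_sum_left)
  also have "\<dots> = (\<Sum>x\<in>I. \<Sum>y\<in>J. conv G (scale (a x) (F x)) (scale (b y) (H y)))"
    by (simp only: conv_sum_right)
  also have "\<dots> = (\<Sum>x\<in>I. \<Sum>y\<in>J. scale (a x * b y) (conv G (F x) (H y)))"
    by (simp add: conv_scale_left conv_scale_right mult.commute)
  finally show ?thesis .
qed

lemma lin_ext_add: "lin_ext G B (f + h) = lin_ext G B f + lin_ext G B h"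
  by (simp add: lin_ext_def scale_add_left sum.distrib)

lemma lin_ext_scale: "lin_ext G B (scale c f) = scale c (lin_ext G B f)"
  by (simp add: lin_ext_def scale_sum)

lemma lin_ext_zero: "lin_ext G B 0 = 0"
  by (simp add: lin_ext_def scale_zero_left)

lemma lin_ext_sum: "lin_ext G B (\<Sum>i\<in>I. F i) = (\<Sum>i\<in>I. lin_ext G B (F i))"
  by (induction I rule: infinite_finite_induct)
    (simp_all only: sum.infinite sum.empty sum.insert lin_ext_zero lin_ext_add not_False_eq_True)

lemma lin_ext_cong: "(\<And>g. g \<in> carrier G \<Longrightarrow> B g = B' g) \<Longrightarrow> lin_ext G B f = lin_ext G B' f"
  unfolding lin_ext_def by (intro sum.cong) simp_all

lemma group_alg_lin_ext:
  "(\<And>g. g \<in> carrier G \<Longrightarrow> B g \<in> group_alg G) \<Longrightarrow> lin_ext G B f \<in> group_alg G"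
  unfolding lin_ext_def by (intro group_alg_sum group_alg_scale)

locale finite_group = group G for G (structure) +
  assumes finite_carrier: "finite (carrier G)"
begin

lemma conv_in_group_alg: "conv G f h \<in> group_alg G"
  by (auto simp: group_alg_def conv_def intro!: sum.neutral)

lemma group_alg_eqI:
  assumes "f \<in> group_alg G" "h \<in> group_alg G" and "\<And>z. z \<in> carrier G \<Longrightarrow> f z = h z"
  shows "f = h"
proof
  fix z
  show "f z = h z" using assms by (cases "z \<in> carrier G") (auto simp: group_alg_def)
qed

lemma conv_gbasis_left:
  assumes "g \<in> carrier G" and "z \<in> carrier G"
  shows "conv G (gbasis g) f z = f (inv g \<otimes> z)"
proof -
  have solve: "g \<otimes> y = z \<longleftrightarrow> y = inv g \<otimes> z" if "y \<in> carrier G" for y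
    using assms that by (auto simp: inv_solve_left)
  have "conv G (gbasis g) f z =
      (\<Sum>x\<in>carrier G. if x = g then (\<Sum>y\<in>carrier G. if y = inv g \<otimes> z then f y else 0) else 0)"
    unfolding conv_def gbasis_def by (intro sum.cong refl) (auto simp: solve cong: if_cong)
  also have "\<dots> = f (inv g \<otimes> z)" using assms finite_carrier by simp
  finally show ?thesis .
qed

lemma conv_gbasis_right:
  assumes "g \<in> carrier G" and "z \<in> carrier G"
  shows "conv G f (gbasis g) z = f (z \<otimes> inv g)"
proof -
  have solve: "x \<otimes> g = z \<longleftrightarrow> x = z \<otimes> inv g" if "x \<in> carrier G" for x
    using assms that by (auto simp: inv_solve_right)
  have "conv G f (gbasis g) z =
      (\<Sum>x\<in>carrier G. \<Sum>y\<in>carrier G. if y = g then (if x = z \<otimes> inv g then f x else 0) else 0)"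
    unfolding conv_def gbasis_def by (intro sum.cong refl) (auto simp: solve cong: if_cong)
  also have "\<dots> = (\<Sum>x\<in>carrier G. if x = z \<otimes> inv g then f x else 0)"
    using assms finite_carrier by simp
  also have "\<dots> = f (z \<otimes> inv g)" using assms finite_carrier by simp
  finally show ?thesis .
qed

lemma conv_gbasis_gbasis:
  assumes "g \<in> carrier G" and "h \<in> carrier G"
  shows "conv G (gbasis g) (gbasis h) = (gbasis (g \<otimes> h) :: _ \<Rightarrow> 'k::comm_ring_1)"
  using assms
  by (intro group_alg_eqI conv_in_group_alg group_alg_gbasis)
    (simp_all add: conv_gbasis_left gbasis_apply inv_solve_left')

lemma conv_one_left: "f \<in> group_alg G \<Longrightarrow> conv G (gbasis \<one>) f = (f :: _ \<Rightarrow> 'k::comm_ring_1)"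
  by (intro group_alg_eqI conv_in_group_alg) (simp_all add: conv_gbasis_left)

lemma conv_one_right: "f \<in> group_alg G \<Longrightarrow> conv G f (gbasis \<one>) = (f :: _ \<Rightarrow> 'k::comm_ring_1)"
  by (intro group_alg_eqI conv_in_group_alg) (simp_all add: conv_gbasis_right)

lemma group_alg_decomp:
  fixes f :: "'a \<Rightarrow> 'k::comm_ring_1"
  assumes "f \<in> group_alg G"
  shows "f = (\<Sum>g\<in>carrier G. scale (f g) (gbasis g))"
proof
  fix z
  have "(\<Sum>g\<in>carrier G. scale (f g) (gbasis g)) z = (\<Sum>g\<in>carrier G. if g = z then f g else 0)"
    unfolding sum_fun_apply by (intro sum.cong) (auto simp: gbasis_def)
  also have "\<dots> = f z" using assms finite_carrier by (simp add: group_alg_def)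
  finally show "f z = (\<Sum>g\<in>carrier G. scale (f g) (gbasis g)) z" ..
qed

lemma lin_ext_gbasis:
  assumes "g \<in> carrier G"
  shows "lin_ext G B (gbasis g) = B g"
proof -
  have "lin_ext G B (gbasis g) = (\<Sum>h\<in>carrier G. if h = g then B h else 0)"
    unfolding lin_ext_def by (intro sum.cong) (auto simp: gbasis_def)
  also have "\<dots> = B g" using assms finite_carrier by simp
  finally show ?thesis .
qed

lemma conv_decomp:
  assumes "f \<in> group_alg G" and "h \<in> group_alg G"
  shows "conv G f h = (\<Sum>x\<in>carrier G. \<Sum>y\<in>carrier G. scale (f x * h y) (gbasis (x \<otimes> y)))"
proof -
  have "conv G f h = conv G (\<Sum>x\<in>carrier G. scale (f x) (gbasis x)) (\<Sum>y\<in>carrier G. scale (h y) (gbasis y))"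
    using assms by (intro arg_cong2[where f = "conv G"] group_alg_decomp)
  also have "\<dots> = (\<Sum>x\<in>carrier G. \<Sum>y\<in>carrier G. scale (f x * h y) (gbasis (x \<otimes> y)))"
    by (simp add: conv_sum_sum conv_gbasis_gbasis)
  finally show ?thesis .
qed

lemma conv_assoc:
  assumes f: "f \<in> group_alg G" and g: "g \<in> group_alg G" and h: "h \<in> group_alg G"
  shows "conv G (conv G f g) h = conv G f (conv G g h)"
proof -
  have "conv G (conv G f g) h = conv G (\<Sum>x\<in>carrier G. \<Sum>y\<in>carrier G.
      scale (f x * g y) (gbasis (x \<otimes> y))) (\<Sum>w\<in>carrier G. scale (h w) (gbasis w))"
    using f g h by (intro arg_cong2[where f = "conv G"] conv_decomp group_alg_decomp)
  also have "\<dots> = (\<Sum>x\<in>carrier G. \<Sum>y\<in>carrier G. \<Sum>w\<in>carrier G.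
      scale (h w * (f x * g y)) (gbasis (x \<otimes> y \<otimes> w)))"
    by (simp only: conv_sum_left)
      (simp add: conv_sum_right conv_scale_left conv_scale_right conv_gbasis_gbasis)
  also have "\<dots> = (\<Sum>x\<in>carrier G. \<Sum>y\<in>carrier G. \<Sum>w\<in>carrier G.
      scale (g y * h w * f x) (gbasis (x \<otimes> (y \<otimes> w))))"
    by (intro sum.cong refl) (simp add: m_assoc mult_ac)
  also have "\<dots> = conv G (\<Sum>x\<in>carrier G. scale (f x) (gbasis x)) (\<Sum>y\<in>carrier G.
      \<Sum>w\<in>carrier G. scale (g y * h w) (gbasis (y \<otimes> w)))"
    by (simp only: conv_sum_left)
      (simp add: conv_sum_right conv_scale_left conv_scale_right conv_gbasis_gbasis)
  also have "\<dots> = conv G f (conv G g h)"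
    using f g h by (intro arg_cong2[where f = "conv G"] conv_decomp[symmetric] group_alg_decomp[symmetric])
  finally show ?thesis .
qed

lemma lin_ext_leibniz:
  assumes B: "\<And>x y. x \<in> carrier G \<Longrightarrow> y \<in> carrier G \<Longrightarrow>
      B (x \<otimes> y) = conv G (B x) (gbasis y) + conv G (gbasis x) (B y)"
    and f: "f \<in> group_alg G" and h: "h \<in> group_alg G"
  shows "lin_ext G B (conv G f h) = conv G (lin_ext G B f) h + conv G f (lin_ext G B h)"
proof -
  have "lin_ext G B (conv G f h) = (\<Sum>x\<in>carrier G. \<Sum>y\<in>carrier G. scale (f x * h y) (B (x \<otimes> y)))"
    by (simp add: conv_decomp[OF f h] lin_ext_sum lin_ext_scale lin_ext_gbasis)
  also have "\<dots> = (\<Sum>x\<in>carrier G. \<Sum>y\<in>carrier G. scale (f x * h y) (conv G (B x) (gbasis y)))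
      + (\<Sum>x\<in>carrier G. \<Sum>y\<in>carrier G. scale (f x * h y) (conv G (gbasis x) (B y)))"
    by (simp add: B scale_add sum.distrib)
  also have "\<dots> = conv G (lin_ext G B f) h + conv G f (lin_ext G B h)"
    using conv_sum_sum[of G f B "carrier G" h gbasis "carrier G"]
      conv_sum_sum[of G f gbasis "carrier G" h B "carrier G"]
    by (simp add: lin_ext_def flip: group_alg_decomp[OF f] group_alg_decomp[OF h])
  finally show ?thesis .
qed

lemma derivation_on_lin_ext:
  assumes "\<And>g. g \<in> carrier G \<Longrightarrow> B g \<in> group_alg G"
    and "\<And>x y. x \<in> carrier G \<Longrightarrow> y \<in> carrier G \<Longrightarrow>
      B (x \<otimes> y) = conv G (B x) (gbasis y) + conv G (gbasis x) (B y)"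
  shows "derivation_on G (lin_ext G B)"
  using assms by (simp add: derivation_on_def group_alg_lin_ext lin_ext_add lin_ext_leibniz)

lemma derivation_on_inner:
  assumes "\<beta> \<in> group_alg G"
  shows "derivation_on G (inner_derivation G \<beta>)"
  using assms
  by (auto simp: derivation_on_def inner_derivation_def conv_in_group_alg group_alg_diff
      conv_add_left conv_add_right conv_diff_left conv_diff_right conv_assoc)

lemma derivation_on_restrict:
  "derivation_on G (restrict d (group_alg G)) \<longleftrightarrow> derivation_on G d"
  by (simp add: derivation_on_def group_alg_add conv_in_group_alg cong: conj_cong)

lemma inner_derivation_eq_lin_ext:
  assumes "f \<in> group_alg G"
  shows "inner_derivation G \<beta> f = lin_ext G (\<lambda>g. inner_derivation G \<beta> (gbasis g)) f"
proof -
  have "inner_derivation G \<beta> f = inner_derivation G \<beta> (\<Sum>g\<in>carrier G. scale (f g) (gbasis g))"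
    using assms by (subst group_alg_decomp) simp_all
  then show ?thesis
    by (simp add: inner_derivation_def lin_ext_def conv_sum_left conv_sum_right
        conv_scale_left conv_scale_right scale_diff sum_subtractf)
qed

text \<open>Both products contribute \<open>\<beta>(g)\<close> to the coefficient of \<open>g\<^sup>2\<close>.\<close>
lemma inner_derivation_gbasis_square:
  assumes "g \<in> carrier G"
  shows "inner_derivation G \<beta> (gbasis g) (g \<otimes> g) = 0"
proof -
  have "inv g \<otimes> (g \<otimes> g) = g" "g \<otimes> g \<otimes> inv g = g"
    using assms by (simp add: m_assoc[symmetric], simp add: m_assoc)
  with assms show ?thesis by (simp add: inner_derivation_def conv_gbasis_left conv_gbasis_right)
qed

end

section \<open>Derivations of group algebras\<close>

locale group_alg_derivation = finite_group G for G (structure) +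
  fixes d :: "('a \<Rightarrow> 'k::field) \<Rightarrow> 'a \<Rightarrow> 'k"
  assumes derivation: "derivation_on G d"
begin

lemma closed: "f \<in> group_alg G \<Longrightarrow> d f \<in> group_alg G"
  and add: "f \<in> group_alg G \<Longrightarrow> h \<in> group_alg G \<Longrightarrow> d (f + h) = d f + d h"
  and leibniz: "f \<in> group_alg G \<Longrightarrow> h \<in> group_alg G \<Longrightarrow>
    d (conv G f h) = conv G (d f) h + conv G f (d h)"
  using derivation by (simp_all add: derivation_on_def)

lemma zero: "d 0 = 0"
  using add[OF group_alg_zero group_alg_zero] by simp

lemma sum: "(\<And>i. i \<in> I \<Longrightarrow> F i \<in> group_alg G) \<Longrightarrow> d (\<Sum>i\<in>I. F i) = (\<Sum>i\<in>I. d (F i))"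
proof (induction I rule: infinite_finite_induct)
  case (insert i I)
  have "d (\<Sum>j\<in>insert i I. F j) = d (F i + (\<Sum>j\<in>I. F j))"
    by (simp only: sum.insert[OF insert.hyps])
  also have "\<dots> = d (F i) + d (\<Sum>j\<in>I. F j)"
    using insert.prems by (intro add) (auto intro: group_alg_sum)
  also have "\<dots> = (\<Sum>j\<in>insert i I. d (F j))"
    using insert.IH insert.prems by (simp add: sum.insert[OF insert.hyps])
  finally show ?case .
qed (simp_all add: zero)

lemma scalar_part_field_derivation: "field_derivation (\<lambda>c. d (scale c (gbasis \<one>)) z)"
proof
  have one: "(gbasis \<one> :: 'a \<Rightarrow> 'k) \<in> group_alg G" by (simp add: group_alg_gbasis)
  fix x y :: 'k
  show "d (scale (x + y) (gbasis \<one>)) z = d (scale x (gbasis \<one>)) z + d (scale y (gbasis \<one>)) z"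
    by (simp add: scale_add_left add group_alg_scale one)
  have "d (scale (x * y) (gbasis \<one>)) = d (conv G (scale x (gbasis \<one>)) (scale y (gbasis \<one>)))"
    by (simp add: conv_scale_left conv_scale_right conv_gbasis_gbasis mult.commute)
  also have "\<dots> = conv G (d (scale x (gbasis \<one>))) (scale y (gbasis \<one>))
      + conv G (scale x (gbasis \<one>)) (d (scale y (gbasis \<one>)))"
    by (intro leibniz group_alg_scale one)
  also have "\<dots> = scale y (d (scale x (gbasis \<one>))) + scale x (d (scale y (gbasis \<one>)))"
    by (simp add: group_alg_scale one conv_scale_left conv_scale_right
        conv_one_left conv_one_right closed)
  finally have "d (scale (x * y) (gbasis \<one>))
      = scale y (d (scale x (gbasis \<one>))) + scale x (d (scale y (gbasis \<one>)))" .
  then show "d (scale (x * y) (gbasis \<one>)) z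
      = x * d (scale y (gbasis \<one>)) z + y * d (scale x (gbasis \<one>)) z"
    by (simp add: add.commute)
qed

context
  assumes field_derivations_vanish: "\<And>D :: 'k \<Rightarrow> 'k. \<And>c. field_derivation D \<Longrightarrow> D c = 0"
begin

lemma scale_linear:
  assumes "f \<in> group_alg G"
  shows "d (scale c f) = scale c (d f)"
proof -
  have c: "scale c (gbasis \<one>) \<in> group_alg G" by (simp add: group_alg_gbasis group_alg_scale)
  have dc: "d (scale c (gbasis \<one>)) = 0"
    using field_derivations_vanish[OF scalar_part_field_derivation] by (simp add: fun_eq_iff)
  have "d (scale c f) = d (conv G (scale c (gbasis \<one>)) f)"
    using assms by (simp add: conv_scale_left conv_one_left)
  also have "\<dots> = conv G (d (scale c (gbasis \<one>))) f + conv G (scale c (gbasis \<one>)) (d f)"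
    using c assms by (rule leibniz)
  also have "\<dots> = scale c (d f)"
    using assms by (simp add: dc conv_zero_left conv_scale_left conv_one_left closed)
  finally show ?thesis .
qed

lemma eq_lin_ext:
  assumes "f \<in> group_alg G"
  shows "d f = lin_ext G (\<lambda>g. d (gbasis g)) f"
proof -
  have "d f = d (\<Sum>g\<in>carrier G. scale (f g) (gbasis g))"
    using assms by (subst group_alg_decomp) simp_all
  also have "\<dots> = lin_ext G (\<lambda>g. d (gbasis g)) f"
    unfolding lin_ext_def
    by (subst sum) (auto intro!: sum.cong group_alg_scale group_alg_gbasis simp: scale_linear group_alg_gbasis)
  finally show ?thesis .
qed

end

text \<open>The averaging trick behind Maschke's theorem: with
  \<open>\<gamma> = \<Sum>\<^sub>g d(g) g\<^sup>-\<^sup>1\<close>, Leibniz and the substitution \<open>g \<mapsto> hg\<close> give \<open>h\<gamma> = \<gamma>h - |G| d(h)\<close>.\<close>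
lemma gbasis_eq_inner:
  assumes N: "of_nat (card (carrier G)) \<noteq> (0::'k)" and h: "h \<in> carrier G"
  defines "\<gamma> \<equiv> \<Sum>g\<in>carrier G. conv G (d (gbasis g)) (gbasis (inv g))"
  shows "d (gbasis h) = inner_derivation G (scale (- inverse (of_nat (card (carrier G)))) \<gamma>) (gbasis h)"
proof -
  let ?N = "of_nat (card (carrier G)) :: 'k"
  have e: "(gbasis g :: 'a \<Rightarrow> 'k) \<in> group_alg G" if "g \<in> carrier G" for g
    using that by (rule group_alg_gbasis)
  have de: "d (gbasis g) \<in> group_alg G" if "g \<in> carrier G" for g
    using that by (intro closed e)
  have shift: "(\<Sum>g\<in>carrier G. conv G (d (gbasis (h \<otimes> g))) (gbasis (inv g))) = conv G \<gamma> (gbasis h)"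
  proof -
    have "(\<Sum>g\<in>carrier G. conv G (d (gbasis (h \<otimes> g))) (gbasis (inv g)))
        = (\<Sum>k\<in>carrier G. conv G (d (gbasis k)) (gbasis (inv k \<otimes> h)))"
      using h by (intro sum.reindex_bij_witness[where i = "\<lambda>k. inv h \<otimes> k" and j = "\<lambda>g. h \<otimes> g"])
        (auto simp: m_assoc[symmetric] inv_mult_group, simp add: m_assoc)
    also have "\<dots> = conv G \<gamma> (gbasis h)"
      using h by (simp add: \<gamma>_def conv_sum_left conv_assoc de e conv_gbasis_gbasis)
    finally show ?thesis .
  qed
  have "conv G (gbasis h) \<gamma> = (\<Sum>g\<in>carrier G. conv G (conv G (gbasis h) (d (gbasis g))) (gbasis (inv g)))"
    using h by (simp add: \<gamma>_def conv_sum_right conv_assoc de e)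
  also have "\<dots> = (\<Sum>g\<in>carrier G. conv G (d (gbasis (h \<otimes> g))) (gbasis (inv g)) - d (gbasis h))"
  proof (intro sum.cong refl)
    fix g assume g: "g \<in> carrier G"
    have "d (gbasis (h \<otimes> g)) = conv G (d (gbasis h)) (gbasis g) + conv G (gbasis h) (d (gbasis g))"
      using g h by (simp add: leibniz e flip: conv_gbasis_gbasis)
    moreover have "conv G (conv G (d (gbasis h)) (gbasis g)) (gbasis (inv g)) = d (gbasis h)"
      using g h by (simp add: conv_assoc de e conv_gbasis_gbasis conv_one_right)
    ultimately show "conv G (conv G (gbasis h) (d (gbasis g))) (gbasis (inv g))
        = conv G (d (gbasis (h \<otimes> g))) (gbasis (inv g)) - d (gbasis h)"
      by (simp add: conv_add_left)
  qed
  also have "\<dots> = conv G \<gamma> (gbasis h) - scale ?N (d (gbasis h))"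
    by (simp add: sum_subtractf shift fun_eq_iff sum_fun_apply)
  finally have "conv G (gbasis h) \<gamma> = conv G \<gamma> (gbasis h) - scale ?N (d (gbasis h))" .
  then show ?thesis
    using N by (simp add: inner_derivation_def conv_scale_left conv_scale_right fun_eq_iff
        field_simps)
qed

theorem is_inner:
  assumes "\<And>D :: 'k \<Rightarrow> 'k. \<And>c. field_derivation D \<Longrightarrow> D c = 0"
    and "of_nat (card (carrier G)) \<noteq> (0::'k)"
  shows "\<exists>\<beta>\<in>group_alg G. \<forall>f\<in>group_alg G. d f = inner_derivation G \<beta> f"
proof -
  define \<beta> where "\<beta> = scale (- inverse (of_nat (card (carrier G))))
    (\<Sum>g\<in>carrier G. conv G (d (gbasis g)) (gbasis (inv g)))"
  have "\<beta> \<in> group_alg G" unfolding \<beta>_def by (intro group_alg_scale group_alg_sum conv_in_group_alg)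
  moreover have "d f = inner_derivation G \<beta> f" if "f \<in> group_alg G" for f
    using that assms gbasis_eq_inner[OF assms(2)]
    by (simp add: eq_lin_ext inner_derivation_eq_lin_ext \<beta>_def cong: lin_ext_cong)
  ultimately show ?thesis by blast
qed

end

section \<open>The dicyclic group\<close>

definition dicyclic :: "nat \<Rightarrow> (nat \<times> nat) monoid" where
  "dicyclic n = \<lparr>carrier = dic_carrier n, mult = dic_mult n, one = (0, 0)\<rparr>"

lemma dicyclic_simps [simp]:
  "carrier (dicyclic n) = dic_carrier n"
  "mult (dicyclic n) = dic_mult n"
  "one (dicyclic n) = (0, 0)"
  by (simp_all add: dicyclic_def)

lemma dic_mult_closed: "n > 0 \<Longrightarrow> dic_mult n x y \<in> dic_carrier n"
  by (auto simp: dic_mult_def dic_carrier_def split: prod.splits)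

definition dic_sign :: "nat \<Rightarrow> int" where
  "dic_sign e = (if e = 0 then 1 else -1)"

text \<open>Exponent arithmetic of \<open>a\<^sup>i b\<^sup>e \<cdot> a\<^sup>j b\<^sup>f\<close> in \<open>\<int>\<close>, free of truncated subtraction.\<close>
lemma fst_dic_mult:
  assumes "n > 0" and x: "x \<in> dic_carrier n" and y: "y \<in> dic_carrier n"
  shows "int (fst (dic_mult n x y)) = (int (fst x) + dic_sign (snd x) * int (fst y)
      + (if snd x = 1 \<and> snd y = 1 then int n else 0)) mod (2 * int n)"
proof -
  obtain i e j f where xy: "x = (i, e)" "y = (j, f)" by (cases x, cases y)
  define c where "c = (if e = 1 \<and> f = 1 then int n else 0)"
  have j: "j < 2 * n" using y xy by (auto simp: dic_carrier_def)
  have "int (fst (dic_mult n x y)) = (int (if e = 0 then i + j else i + (2 * n - j)) + c) mod (2 * int n)"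
    by (simp add: xy dic_mult_def of_nat_mod c_def)
  also have "\<dots> = (int i + dic_sign e * int j + c) mod (2 * int n)"
  proof (cases "e = 0")
    case False
    have "int (i + (2 * n - j)) + c = (int i - int j + c) + 2 * int n" using j by simp
    then have "(int (i + (2 * n - j)) + c) mod (2 * int n) = (int i - int j + c) mod (2 * int n)"
      by (simp only: mod_add_self2)
    then show ?thesis using False by (simp add: dic_sign_def)
  qed (simp add: dic_sign_def)
  finally show ?thesis by (simp add: xy c_def)
qed

lemma snd_dic_mult: "snd (dic_mult n x y) = (snd x + snd y) mod 2"
  by (simp add: dic_mult_def split: prod.splits)

lemma dic_mult_assoc:
  assumes n: "n > 0" and xyz: "x \<in> dic_carrier n" "y \<in> dic_carrier n" "z \<in> dic_carrier n"
  shows "dic_mult n (dic_mult n x y) z = dic_mult n x (dic_mult n y z)"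
proof -
  obtain i e j f k g where x: "x = (i, e)" and y: "y = (j, f)" and z: "z = (k, g)"
    by (cases x, cases y, cases z)
  have b: "e < 2" "f < 2" "g < 2" using xyz x y z by (auto simp: dic_carrier_def)
  have cl: "dic_mult n x y \<in> dic_carrier n" "dic_mult n y z \<in> dic_carrier n"
    using n by (simp_all add: dic_mult_closed)
  define N where "N = 2 * int n"
  define c where "c u v = (if u = 1 \<and> v = 1 then int n else 0)" for u v :: nat
  have L: "int (fst (dic_mult n (dic_mult n x y) z))
      = (int i + dic_sign e * int j + c e f + dic_sign ((e + f) mod 2) * int k + c ((e + f) mod 2) g) mod N"
  proof -
    have "int (fst (dic_mult n (dic_mult n x y) z))
        = (int (fst (dic_mult n x y)) + dic_sign ((e + f) mod 2) * int k + c ((e + f) mod 2) g) mod N"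
      by (subst fst_dic_mult) (use n cl xyz in \<open>simp_all only: x y z snd_dic_mult fst_conv snd_conv c_def N_def\<close>)
    also have "\<dots> = ((int i + dic_sign e * int j + c e f) mod N
        + dic_sign ((e + f) mod 2) * int k + c ((e + f) mod 2) g) mod N"
      by (subst fst_dic_mult) (use n xyz in \<open>simp_all only: x y fst_conv snd_conv c_def N_def\<close>)
    also have "\<dots> = (int i + dic_sign e * int j + c e f
        + dic_sign ((e + f) mod 2) * int k + c ((e + f) mod 2) g) mod N"
      by (intro mod_add_cong mod_mod_trivial refl)
    finally show ?thesis .
  qed
  have R: "int (fst (dic_mult n x (dic_mult n y z)))
      = (int i + dic_sign e * (int j + dic_sign f * int k + c f g) + c e ((f + g) mod 2)) mod N"
  proof -
    have "int (fst (dic_mult n x (dic_mult n y z)))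
        = (int i + dic_sign e * int (fst (dic_mult n y z)) + c e ((f + g) mod 2)) mod N"
      by (subst fst_dic_mult) (use n cl xyz in \<open>simp_all only: x y z snd_dic_mult fst_conv snd_conv c_def N_def\<close>)
    also have "\<dots> = (int i + dic_sign e * ((int j + dic_sign f * int k + c f g) mod N)
        + c e ((f + g) mod 2)) mod N"
      by (subst fst_dic_mult) (use n xyz in \<open>simp_all only: y z fst_conv snd_conv c_def N_def\<close>)
    also have "\<dots> = (int i + dic_sign e * (int j + dic_sign f * int k + c f g)
        + c e ((f + g) mod 2)) mod N"
      by (intro mod_add_cong mod_mult_right_eq refl)
    finally show ?thesis .
  qed
  have "(int i + dic_sign e * int j + c e f + dic_sign ((e + f) mod 2) * int k + c ((e + f) mod 2) g) mod N
      = (int i + dic_sign e * (int j + dic_sign f * int k + c f g) + c e ((f + g) mod 2)) mod N"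
    unfolding mod_eq_dvd_iff using b
    by (cases "e = 0"; cases "f = 0"; cases "g = 0")
      (auto simp: dic_sign_def c_def N_def algebra_simps less_2_cases_iff)
  then show ?thesis
    using L R by (simp add: prod_eq_iff snd_dic_mult mod_add_left_eq mod_add_right_eq add.assoc)
qed

lemma group_dicyclic:
  assumes n: "n > 0"
  shows "group (dicyclic n)"
proof (rule groupI)
  fix x assume x: "x \<in> carrier (dicyclic n)"
  then obtain i e where ie: "x = (i, e)" "i < 2 * n" "e < 2" by (auto simp: dic_carrier_def)
  show "\<one>\<^bsub>dicyclic n\<^esub> \<otimes>\<^bsub>dicyclic n\<^esub> x = x"
    using ie by (auto simp: dic_mult_def less_2_cases_iff)
  let ?y = "if e = 0 then ((2 * n - i) mod (2 * n), 0) else ((i + n) mod (2 * n), 1)"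
  have "dic_mult n ?y x = (0, 0)"
    using ie n by (auto simp: dic_mult_def mod_if less_2_cases_iff)
  moreover have "?y \<in> dic_carrier n" using n by (simp add: dic_carrier_def)
  ultimately show "\<exists>y\<in>carrier (dicyclic n). y \<otimes>\<^bsub>dicyclic n\<^esub> x = \<one>\<^bsub>dicyclic n\<^esub>" by auto
next
  show "\<one>\<^bsub>dicyclic n\<^esub> \<in> carrier (dicyclic n)" using n by (simp add: dic_carrier_def)
qed (use n in \<open>simp_all add: dic_mult_closed dic_mult_assoc\<close>)

lemma finite_group_dicyclic: "n > 0 \<Longrightarrow> finite_group (dicyclic n)"
  by (simp add: finite_group_def finite_group_axioms_def group_dicyclic dic_carrier_def)

lemma card_dic_carrier: "card (dic_carrier n) = 4 * n"
  by (simp add: dic_carrier_def card_cartesian_product)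

lemma of_nat_fst_dic_mult:
  assumes n: "n > 0" and char: "of_nat n = (0::'k::comm_ring_1)"
    and x: "x \<in> dic_carrier n" and y: "y \<in> dic_carrier n"
  shows "(of_nat (fst (dic_mult n x y)) :: 'k) = of_nat (fst x) + of_int (dic_sign (snd x)) * of_nat (fst y)"
proof -
  define A where "A = int (fst x) + dic_sign (snd x) * int (fst y) + (if snd x = 1 \<and> snd y = 1 then int n else 0)"
  have "int (fst (dic_mult n x y)) = A mod (2 * int n)"
    unfolding A_def by (rule fst_dic_mult[OF n x y])
  also have "\<dots> = A - 2 * int n * (A div (2 * int n))"
    by (metis minus_div_mult_eq_mod mult.commute)
  finally have "(of_nat (fst (dic_mult n x y)) :: 'k) = of_int (A - 2 * int n * (A div (2 * int n)))"
    by (metis of_int_of_nat_eq)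
  also have "\<dots> = of_nat (fst x) + of_int (dic_sign (snd x)) * of_nat (fst y)"
    using char by (simp add: A_def)
  finally show ?thesis .
qed

lemma dic_mult_rotation_commute:
  assumes "n \<ge> 1" and "x \<in> dic_carrier n"
  shows "dic_mult n x (1, 0) = dic_mult n (if snd x = 0 then (1, 0) else (2 * n - 1, 0)) x"
    and "dic_mult n x (2 * n - 1, 0) = dic_mult n (if snd x = 0 then (2 * n - 1, 0) else (1, 0)) x"
  using assms by (auto simp: dic_mult_def dic_carrier_def add.commute)

section \<open>Derivations of the dicyclic group algebra\<close>

lemma ga_carrier_eq: "ga_carrier n = group_alg (dicyclic n)"
  by (simp add: ga_carrier_def group_alg_def)

lemma ga_mult_eq: "ga_mult n = conv (dicyclic n)"
  by (simp add: fun_eq_iff ga_mult_def conv_def)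

lemma ga_add_eq: "ga_add f g = f + g"
  by (simp add: ga_add_def plus_fun_def)

lemma ga_sub_eq: "ga_sub f g = f - g"
  by (simp add: ga_sub_def fun_diff_def)

lemma Der_eq: "Der n = {d \<in> extensional (ga_carrier n). derivation_on (dicyclic n) d}"
  by (auto simp: Der_def derivation_on_def ga_carrier_eq ga_mult_eq ga_add_eq)

lemma Der_inn_eq:
  "Der_inn n = {restrict (inner_derivation (dicyclic n) \<beta>) (ga_carrier n) | \<beta>. \<beta> \<in> ga_carrier n}"
  by (simp add: Der_inn_def inner_derivation_def[abs_def] ga_mult_eq ga_sub_eq)

lemma Der_inn_subset_Der:
  assumes "n > 0"
  shows "(Der_inn n :: ((nat \<times> nat \<Rightarrow> 'k::field) \<Rightarrow> _) set) \<subseteq> Der n"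
proof
  interpret finite_group "dicyclic n" using assms by (rule finite_group_dicyclic)
  fix d :: "(nat \<times> nat \<Rightarrow> 'k) \<Rightarrow> nat \<times> nat \<Rightarrow> 'k" assume "d \<in> Der_inn n"
  then obtain \<beta> where "d = restrict (inner_derivation (dicyclic n) \<beta>) (group_alg (dicyclic n))"
    and "\<beta> \<in> group_alg (dicyclic n)"
    by (auto simp: Der_inn_eq ga_carrier_eq)
  then show "d \<in> Der n"
    by (simp add: Der_eq ga_carrier_eq derivation_on_restrict derivation_on_inner)
qed

lemma Der_subset_Der_inn:
  fixes n :: nat
  assumes n: "n > 0"
    and vanish: "\<And>D :: 'k::field \<Rightarrow> 'k. \<And>c. field_derivation D \<Longrightarrow> D c = 0"
    and card: "of_nat (4 * n) \<noteq> (0::'k)"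
  shows "(Der n :: ((nat \<times> nat \<Rightarrow> 'k) \<Rightarrow> _) set) \<subseteq> Der_inn n"
proof
  fix d :: "(nat \<times> nat \<Rightarrow> 'k) \<Rightarrow> nat \<times> nat \<Rightarrow> 'k" assume "d \<in> Der n"
  then have ext: "d \<in> extensional (group_alg (dicyclic n))" and der: "derivation_on (dicyclic n) d"
    by (simp_all add: Der_eq ga_carrier_eq)
  interpret group_alg_derivation "dicyclic n" d
    using finite_group_dicyclic[OF n] der by (simp add: group_alg_derivation_def group_alg_derivation_axioms_def)
  have "\<exists>\<beta>\<in>group_alg (dicyclic n). \<forall>f\<in>group_alg (dicyclic n). d f = inner_derivation (dicyclic n) \<beta> f"
    by (rule is_inner) (use vanish card in \<open>simp_all add: card_dic_carrier\<close>)
  then obtain \<beta> where \<beta>: "\<beta> \<in> group_alg (dicyclic n)"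
    and eq: "\<And>f. f \<in> group_alg (dicyclic n) \<Longrightarrow> d f = inner_derivation (dicyclic n) \<beta> f"
    by blast
  have "d = restrict (inner_derivation (dicyclic n) \<beta>) (group_alg (dicyclic n))"
  proof
    fix f
    show "d f = restrict (inner_derivation (dicyclic n) \<beta>) (group_alg (dicyclic n)) f"
      using eq extensional_arb[OF ext] by (cases "f \<in> group_alg (dicyclic n)") simp_all
  qed
  then show "d \<in> Der_inn n" using \<beta> by (auto simp: Der_inn_eq ga_carrier_eq)
qed

text \<open>The exponent of a product is \<open>i \<plusminus> j\<close> only up to
  multiples of \<open>n\<close> (from \<open>b\<^sup>2 = a\<^sup>n\<close> and \<open>a\<^sup>2\<^sup>n = 1\<close>), so Leibniz needs \<open>n = 0\<close> in the field.\<close>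
definition dic_outer_basis :: "nat \<Rightarrow> nat \<times> nat \<Rightarrow> nat \<times> nat \<Rightarrow> 'k::comm_ring_1" where
  "dic_outer_basis n g = scale (of_nat (fst g))
     (gbasis (dic_mult n (1, 0) g) - gbasis (dic_mult n (2 * n - 1, 0) g))"

lemma dic_outer_basis_leibniz:
  assumes n: "n \<ge> 1" and char: "of_nat n = (0::'k::field)"
    and x: "x \<in> dic_carrier n" and y: "y \<in> dic_carrier n"
  shows "(dic_outer_basis n (dic_mult n x y) :: _ \<Rightarrow> 'k)
    = conv (dicyclic n) (dic_outer_basis n x) (gbasis y) + conv (dicyclic n) (gbasis x) (dic_outer_basis n y)"
proof -
  interpret finite_group "dicyclic n" using n by (simp add: finite_group_dicyclic)
  let ?a = "(1, 0) :: nat \<times> nat" and ?a' = "(2 * n - 1, 0) :: nat \<times> nat"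
  let ?\<Delta> = "gbasis (dic_mult n ?a (dic_mult n x y)) - gbasis (dic_mult n ?a' (dic_mult n x y)) :: _ \<Rightarrow> 'k"
  have a: "?a \<in> dic_carrier n" "?a' \<in> dic_carrier n" using n by (simp_all add: dic_carrier_def)
  have n0: "n > 0" using n by simp
  have cl: "dic_mult n u v \<in> dic_carrier n" for u v using n0 by (rule dic_mult_closed)
  have left: "conv (dicyclic n) (dic_outer_basis n x) (gbasis y) = scale (of_nat (fst x)) ?\<Delta>"
    using x y a cl n0 by (simp add: dic_outer_basis_def conv_scale_left conv_diff_left conv_gbasis_gbasis
        dic_mult_assoc)
  have "conv (dicyclic n) (gbasis x) (dic_outer_basis n y)
      = scale (of_nat (fst y)) (gbasis (dic_mult n (dic_mult n x ?a) y) - gbasis (dic_mult n (dic_mult n x ?a') y))"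
    using x y a cl n0 by (simp add: dic_outer_basis_def conv_scale_right conv_diff_right conv_gbasis_gbasis
        dic_mult_assoc)
  also have "\<dots> = scale (of_int (dic_sign (snd x)) * of_nat (fst y)) ?\<Delta>"
  proof -
    have "dic_mult n (dic_mult n x ?a) y = dic_mult n (if snd x = 0 then ?a else ?a') (dic_mult n x y)"
      and "dic_mult n (dic_mult n x ?a') y = dic_mult n (if snd x = 0 then ?a' else ?a) (dic_mult n x y)"
      unfolding dic_mult_rotation_commute[OF n x] using x y a n0 by (simp_all add: dic_mult_assoc)
    then show ?thesis by (cases "snd x = 0") (simp_all add: dic_sign_def fun_eq_iff algebra_simps)
  qed
  finally show ?thesis
    using left of_nat_fst_dic_mult[OF _ char x y] n
    by (simp add: dic_outer_basis_def scale_add_left)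
qed

definition dic_outer_derivation :: "nat \<Rightarrow> (nat \<times> nat \<Rightarrow> 'k::field) \<Rightarrow> nat \<times> nat \<Rightarrow> 'k" where
  "dic_outer_derivation n = restrict (lin_ext (dicyclic n) (dic_outer_basis n)) (ga_carrier n)"

lemma dic_outer_derivation_in_Der:
  assumes n: "n \<ge> 1" and char: "of_nat n = (0::'k::field)"
  shows "(dic_outer_derivation n :: (_ \<Rightarrow> 'k) \<Rightarrow> _) \<in> Der n"
proof -
  interpret finite_group "dicyclic n" using n by (simp add: finite_group_dicyclic)
  have "derivation_on (dicyclic n) (lin_ext (dicyclic n) (dic_outer_basis n) :: (_ \<Rightarrow> 'k) \<Rightarrow> _)"
  proof (rule derivation_on_lin_ext)
    show "dic_outer_basis n g \<in> group_alg (dicyclic n)" for g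
      using n by (simp add: dic_outer_basis_def group_alg_scale group_alg_diff group_alg_gbasis
          dic_mult_closed)
  qed (simp add: dic_outer_basis_leibniz[OF n char])
  then show ?thesis by (simp add: Der_eq dic_outer_derivation_def ga_carrier_eq derivation_on_restrict)
qed

lemma dic_outer_derivation_not_inner:
  assumes n: "n \<ge> 2"
  shows "(dic_outer_derivation n :: (_ \<Rightarrow> 'k::field) \<Rightarrow> _) \<notin> Der_inn n"
proof
  interpret finite_group "dicyclic n" using n by (simp add: finite_group_dicyclic)
  let ?a = "(1, 0) :: nat \<times> nat"
  have a: "?a \<in> dic_carrier n" using n by (simp add: dic_carrier_def)
  assume "(dic_outer_derivation n :: (_ \<Rightarrow> 'k) \<Rightarrow> _) \<in> Der_inn n"
  then obtain \<beta> :: "nat \<times> nat \<Rightarrow> 'k" where "restrict (lin_ext (dicyclic n) (dic_outer_basis n)) (ga_carrier n)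
      = restrict (inner_derivation (dicyclic n) \<beta>) (ga_carrier n)"
    by (auto simp: Der_inn_eq dic_outer_derivation_def)
  moreover have "(gbasis ?a :: _ \<Rightarrow> 'k) \<in> ga_carrier n"
    using a by (simp add: ga_carrier_eq group_alg_gbasis)
  ultimately have "lin_ext (dicyclic n) (dic_outer_basis n) (gbasis ?a) = inner_derivation (dicyclic n) \<beta> (gbasis ?a)"
    by (metis restrict_apply')
  then have "dic_outer_basis n ?a (dic_mult n ?a ?a) = (0::'k)"
    using a inner_derivation_gbasis_square[of ?a \<beta>] by (simp add: lin_ext_gbasis)
  moreover have "dic_outer_basis n ?a (dic_mult n ?a ?a) = (1::'k)"
    using n by (simp add: dic_outer_basis_def dic_mult_def gbasis_apply)
  ultimately show False by simp
qed

lemma of_nat_four_mult_nonzero: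
  fixes n p :: nat
  assumes "n > 0" and p: "prime p" "odd p"
    and char: "CHAR('a::field) = 0 \<or> (CHAR('a) = p \<and> coprime n p)"
  shows "of_nat (4 * n) \<noteq> (0::'a)"
proof
  assume "of_nat (4 * n) = (0::'a)"
  then have dvd: "CHAR('a) dvd 4 * n" by (simp only: of_nat_eq_0_iff_char_dvd)
  show False using char
  proof
    assume "CHAR('a) = p \<and> coprime n p"
    then have "p dvd 2 * 2 \<or> p dvd n" and cop: "coprime n p"
      using dvd p(1) by (simp_all add: prime_dvd_mult_iff)
    moreover have "\<not> p dvd n"
      using cop p(1) coprime_common_divisor[of n p p] by auto
    moreover have "\<not> p dvd 2 * 2"
    proof
      assume "p dvd 2 * 2"
      then have "p dvd 2" using prime_dvd_mult_iff[OF p(1), of 2 2] by blast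
      then have "p \<le> 2" by (simp add: dvd_imp_le)
      with p show False using prime_ge_2_nat[of p] by (cases "p = 2") auto
    qed
    ultimately show False by blast
  qed (use dvd assms(1) in simp)
qed

theorem corollary4p6:
  fixes n p :: nat
  assumes "n \<ge> 2"
    and "algebraic_over_prime_field TYPE('a::field)"
    and "prime p" and "odd p"
  shows "((CHAR('a) = 0 \<or> (CHAR('a) = p \<and> coprime n p)) \<longrightarrow>
            (Der n :: ((nat \<times> nat \<Rightarrow> 'a) \<Rightarrow> _) set) = Der_inn n)
       \<and> ((CHAR('a) = p \<and> \<not> coprime n p) \<longrightarrow>
            (Der_inn n :: ((nat \<times> nat \<Rightarrow> 'a) \<Rightarrow> _) set) \<subset> Der n)"
proof -
  have n: "n > 0" using assms(1) by simp
  have inner: "(Der_inn n :: ((nat \<times> nat \<Rightarrow> 'a) \<Rightarrow> _) set) \<subseteq> Der n"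
    using n by (rule Der_inn_subset_Der)
  have "(Der n :: ((nat \<times> nat \<Rightarrow> 'a) \<Rightarrow> _) set) = Der_inn n"
    if char: "CHAR('a) = 0 \<or> (CHAR('a) = p \<and> coprime n p)"
  proof (rule equalityI[OF Der_subset_Der_inn[OF n] inner])
    show "D c = 0" if "field_derivation D" for D :: "'a \<Rightarrow> 'a" and c
      using that assms(2) by (rule field_derivation.vanishes_if_algebraic)
    show "of_nat (4 * n) \<noteq> (0::'a)"
      using n assms(3,4) char by (rule of_nat_four_mult_nonzero)
  qed
  moreover have "(Der_inn n :: ((nat \<times> nat \<Rightarrow> 'a) \<Rightarrow> _) set) \<subset> Der n"
    if char: "CHAR('a) = p \<and> \<not> coprime n p"
  proof -
    have "p dvd n" using char prime_imp_coprime[OF assms(3), of n] by (auto simp: coprime_commute)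
    then have "of_nat n = (0::'a)" using char by (simp add: of_nat_eq_0_iff_char_dvd)
    then have "(dic_outer_derivation n :: (_ \<Rightarrow> 'a) \<Rightarrow> _) \<in> Der n"
      using assms(1) by (intro dic_outer_derivation_in_Der) simp_all
    moreover have "(dic_outer_derivation n :: (_ \<Rightarrow> 'a) \<Rightarrow> _) \<notin> Der_inn n"
      using assms(1) by (rule dic_outer_derivation_not_inner)
    ultimately show ?thesis using inner by blast
  qed
  ultimately show ?thesis by blast
qed

end
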